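(* Let $G$ and $H$ be abelian groups, let $T \subset G$ be a tile, and let $\rho : G \to H$ be a surjective homomorphism that is injective on $T$. Let $k,\ell \ge 0$ be integers. If $G^k\times H^\ell$ is $(T^{\times k}, \rho(T)^{\times \ell})$-tilable, then $G^{k+\ell}$ is $T$-tilable.
   Context: A tile in an abelian group is a non-empty subset. Given abelian groups $K_1,\dots,K_r$ and tiles $V_j\subset K_j$, let $\mathsf{V}_j \subset K_1\times\dots\times K_r$ be the set of points whose $j$-th coordinate lies in $V_j$ and whose other coordinates are $0$. A copy of $V_j$ is a translate $\mathsf{V}_j + x$ with $x \in K_1\times\dots\times K_r$. A subset of $K_1\times\dots\times K_r$ is $(V_1,\dots,V_r)$-tilable if it is a disjoint union of copies of $V_1,\dots,V_r$. The notation $V^{\times e}$ stands for $e$ consecutive entries $V,\dots,V$, and "$T$-tilable" for a subset of $G^{e}$ means $(T^{\times e})$-tilable. *)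

theory Defs
  imports Main
begin

definition tile :: "'a set \<Rightarrow> bool" where
  "tile T \<longleftrightarrow> T \<noteq> {}"

text \<open>Points of G^n, modelled as functions nat => G vanishing at indices >= n.\<close>
definition pow_space :: "nat \<Rightarrow> (nat \<Rightarrow> 'g::zero) set" where
  "pow_space n = {x. \<forall>i. n \<le> i \<longrightarrow> x i = 0}"

definition single :: "nat \<Rightarrow> 'g::zero \<Rightarrow> nat \<Rightarrow> 'g" where
  "single i t = (\<lambda>m. if m = i then t else 0)"

definition copy_at :: "nat \<Rightarrow> 'g::monoid_add set \<Rightarrow> (nat \<Rightarrow> 'g) \<Rightarrow> (nat \<Rightarrow> 'g) set" where
  "copy_at i V x = {(\<lambda>m. single i t m + x m) | t. t \<in> V}"

definition pow_tilable :: "nat \<Rightarrow> 'g::monoid_add set \<Rightarrow> bool" where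
  "pow_tilable n T \<longleftrightarrow>
     (\<exists>\<C>. (\<forall>C\<in>\<C>. \<exists>i<n. \<exists>x\<in>pow_space n. C = copy_at i T x)
         \<and> pairwise disjnt \<C> \<and> \<Union>\<C> = pow_space n)"

definition mixed_tilable :: "nat \<Rightarrow> nat \<Rightarrow> 'g::monoid_add set \<Rightarrow> 'h::monoid_add set \<Rightarrow> bool" where
  "mixed_tilable k l T S \<longleftrightarrow>
     (\<exists>\<C>. (\<forall>C\<in>\<C>.
             (\<exists>i<k. \<exists>x\<in>pow_space k. \<exists>y\<in>pow_space l. C = copy_at i T x \<times> {y})
           \<or> (\<exists>j<l. \<exists>x\<in>pow_space k. \<exists>y\<in>pow_space l. C = {x} \<times> copy_at j S y))
         \<and> pairwise disjnt \<C> \<and> \<Union>\<C> = pow_space k \<times> pow_space l)"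

end

theory Submission
  imports Defs "HOL-Library.Disjoint_Sets" "HOL-Library.Function_Algebras" "HOL-Library.Product_Plus"
begin

text \<open>The homomorphism \<open>\<pi> = id\<^sup>k \<times> \<rho>\<^sup>l\<close> maps \<open>G\<^sup>k\<^sup>+\<^sup>l\<close> into \<open>G\<^sup>k \<times> H\<^sup>l\<close>, so the preimages
  of the tiles of the given tiling partition \<open>G\<^sup>k\<^sup>+\<^sup>l\<close>. Every tile is a translate \<open>e(T) + w\<close> of a
  coordinate embedding of \<open>T\<close> (via \<open>\<rho>\<close> for the \<open>H\<close>-coordinates), and \<open>e = \<pi> \<circ> single c\<close> on
  \<open>T\<close> for a suitable coordinate \<open>c\<close>. Hence its preimage is the union of the copies
  \<open>single c (T) + z\<close> over the fibre \<open>z \<in> \<pi>\<^sup>-\<^sup>1(w)\<close>, and these copies are disjoint because \<open>e\<close>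
  is injective on \<open>T\<close>, which is where \<open>inj_on \<rho> T\<close> enters.\<close>

definition tiled_by :: "'a set set \<Rightarrow> 'a set \<Rightarrow> bool" where
  "tiled_by \<F> X \<longleftrightarrow> (\<exists>\<C>\<subseteq>\<F>. disjoint \<C> \<and> \<Union>\<C> = X)"

lemma tiled_by_mono:
  assumes "tiled_by \<F> X" and "\<F> \<subseteq> \<G>"
  shows "tiled_by \<G> X"
  using assms unfolding tiled_by_def by (blast intro: subset_trans)

lemma tiled_by_vimage:
  assumes "disjoint \<C>" and "f ` A \<subseteq> \<Union>\<C>"
    and "\<And>C. C \<in> \<C> \<Longrightarrow> tiled_by \<F> (A \<inter> f -` C)"
  shows "tiled_by \<F> A"
proof -
  obtain \<D> where sub: "\<And>C. C \<in> \<C> \<Longrightarrow> \<D> C \<subseteq> \<F>"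
    and dis: "\<And>C. C \<in> \<C> \<Longrightarrow> disjoint (\<D> C)"
    and un: "\<And>C. C \<in> \<C> \<Longrightarrow> \<Union>(\<D> C) = A \<inter> f -` C"
    using assms(3) unfolding tiled_by_def by metis
  have "disjoint_family_on (\<lambda>C. \<Union>(\<D> C)) \<C>"
    unfolding disjoint_family_on_def
  proof (intro ballI impI)
    fix C C' assume "C \<in> \<C>" "C' \<in> \<C>" "C \<noteq> C'"
    then have "disjnt C C'"
      by (rule pairwiseD[OF assms(1)])
    then show "\<Union>(\<D> C) \<inter> \<Union>(\<D> C') = {}"
      using un \<open>C \<in> \<C>\<close> \<open>C' \<in> \<C>\<close> by (auto simp: disjnt_def)
  qed
  with dis have "disjoint (\<Union>C\<in>\<C>. \<D> C)"
    by (rule disjoint_UN)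
  moreover have "\<Union>(\<Union>C\<in>\<C>. \<D> C) = A"
  proof -
    have "\<Union>(\<Union>C\<in>\<C>. \<D> C) = (\<Union>C\<in>\<C>. \<Union>(\<D> C))"
      by blast
    also have "\<dots> = (\<Union>C\<in>\<C>. A \<inter> f -` C)"
      using un by (intro SUP_cong) auto
    also have "\<dots> = A"
      using assms(2) by blast
    finally show ?thesis .
  qed
  moreover have "(\<Union>C\<in>\<C>. \<D> C) \<subseteq> \<F>"
    using sub by blast
  ultimately show ?thesis
    unfolding tiled_by_def by blast
qed

lemma vimage_translated_image:
  fixes \<phi> :: "'a::ab_group_add \<Rightarrow> 'b::ab_group_add"
  assumes add: "\<And>a b. \<phi> (a + b) = \<phi> a + \<phi> b"
    and e: "\<And>t. t \<in> T \<Longrightarrow> \<phi> (e t) = e' t"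
  shows "\<phi> -` ((\<lambda>t. e' t + w) ` T) = (\<Union>z\<in>\<phi> -` {w}. (\<lambda>t. e t + z) ` T)"
proof (intro equalityI subsetI)
  fix p assume "p \<in> \<phi> -` ((\<lambda>t. e' t + w) ` T)"
  then obtain t where t: "t \<in> T" "\<phi> p = e' t + w" by auto
  have "\<phi> (p - e t) = w"
    using add[of "p - e t" "e t"] t e by (simp add: algebra_simps)
  moreover have "p = e t + (p - e t)" by simp
  ultimately show "p \<in> (\<Union>z\<in>\<phi> -` {w}. (\<lambda>t. e t + z) ` T)"
    using t(1) by blast
qed (auto simp: add e)

lemma disjoint_translated_images:
  fixes \<phi> :: "'a::ab_group_add \<Rightarrow> 'b::ab_group_add"
  assumes add: "\<And>a b. \<phi> (a + b) = \<phi> a + \<phi> b"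
    and e: "\<And>t. t \<in> T \<Longrightarrow> \<phi> (e t) = e' t" and inj: "inj_on e' T"
  shows "disjoint ((\<lambda>z. (\<lambda>t. e t + z) ` T) ` (\<phi> -` {w}))"
proof (rule pairwise_imageI)
  fix z z' assume z: "z \<in> \<phi> -` {w}" and z': "z' \<in> \<phi> -` {w}"
    and ne: "(\<lambda>t. e t + z) ` T \<noteq> (\<lambda>t. e t + z') ` T"
  show "disjnt ((\<lambda>t. e t + z) ` T) ((\<lambda>t. e t + z') ` T)"
  proof (rule ccontr)
    assume "\<not> ?thesis"
    then obtain t t' where t: "t \<in> T" "t' \<in> T" and eq: "e t + z = e t' + z'"
      by (auto simp: disjnt_def)
    have "e' t + w = e' t' + w"
      using arg_cong[OF eq, of \<phi>] z z' t by (simp add: add e)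
    then have "t = t'" using inj t by (simp add: inj_on_eq_iff)
    then show False using eq ne by simp
  qed
qed

lemma tiled_by_translates_vimage:
  fixes \<phi> :: "'a::ab_group_add \<Rightarrow> 'b::ab_group_add"
  assumes add: "\<And>a b. \<phi> (a + b) = \<phi> a + \<phi> b"
    and e: "\<And>t. t \<in> T \<Longrightarrow> \<phi> (e t) = e' t" and inj: "inj_on e' T"
    and closed: "\<And>z t. t \<in> T \<Longrightarrow> e t + z \<in> A \<longleftrightarrow> z \<in> A"
  shows "tiled_by ((\<lambda>z. (\<lambda>t. e t + z) ` T) ` (A \<inter> \<phi> -` {w}))
           (A \<inter> \<phi> -` ((\<lambda>t. e' t + w) ` T))"
  unfolding tiled_by_def
proof (intro exI conjI)
  show "disjoint ((\<lambda>z. (\<lambda>t. e t + z) ` T) ` (A \<inter> \<phi> -` {w}))"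
    using disjoint_translated_images[OF add e inj, of w] by (rule pairwise_subset) auto
  have "A \<inter> \<phi> -` ((\<lambda>t. e' t + w) ` T) = A \<inter> (\<Union>z\<in>\<phi> -` {w}. (\<lambda>t. e t + z) ` T)"
    by (simp only: vimage_translated_image[OF add e])
  also have "\<dots> = \<Union>((\<lambda>z. (\<lambda>t. e t + z) ` T) ` (A \<inter> \<phi> -` {w}))"
    using closed by fastforce
  finally show "\<Union>((\<lambda>z. (\<lambda>t. e t + z) ` T) ` (A \<inter> \<phi> -` {w}))
      = A \<inter> \<phi> -` ((\<lambda>t. e' t + w) ` T)"
    by (rule sym)
qed simp

definition copies :: "nat \<Rightarrow> 'g::monoid_add set \<Rightarrow> (nat \<Rightarrow> 'g) set set" where
  "copies n T = (\<Union>i<n. copy_at i T ` pow_space n)"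

lemma subset_copies_iff:
  "\<C> \<subseteq> copies n T \<longleftrightarrow> (\<forall>C\<in>\<C>. \<exists>i<n. \<exists>x\<in>pow_space n. C = copy_at i T x)"
  unfolding copies_def subset_iff UN_iff image_iff lessThan_iff Bex_def Ball_def by (rule refl)

lemma pow_tilable_iff_tiled_by: "pow_tilable n T \<longleftrightarrow> tiled_by (copies n T) (pow_space n)"
  unfolding pow_tilable_def tiled_by_def subset_copies_iff by (rule refl)

lemma copy_at_eq_image: "copy_at i V x = (\<lambda>t. single i t + x) ` V"
  unfolding copy_at_def plus_fun_def by (rule Setcompr_eq_image)

lemma single_add_in_pow_space:
  fixes x :: "nat \<Rightarrow> 'g::monoid_add"
  assumes "i < n"
  shows "single i t + x \<in> pow_space n \<longleftrightarrow> x \<in> pow_space n"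
  using assms by (auto simp: pow_space_def single_def)

lemma single_eq_single_iff [simp]: "single i s = single i t \<longleftrightarrow> s = t"
  by (metis single_def)

lemma tiled_by_copies_vimage:
  fixes \<phi> :: "(nat \<Rightarrow> 'g::ab_group_add) \<Rightarrow> 'b::ab_group_add"
  assumes "c < n" and add: "\<And>a b. \<phi> (a + b) = \<phi> a + \<phi> b"
    and e: "\<And>t. t \<in> T \<Longrightarrow> \<phi> (single c t) = e' t" and inj: "inj_on e' T"
  shows "tiled_by (copies n T) (pow_space n \<inter> \<phi> -` ((\<lambda>t. e' t + w) ` T))"
proof -
  have tiled: "tiled_by (copy_at c T ` (pow_space n \<inter> \<phi> -` {w}))
      (pow_space n \<inter> \<phi> -` ((\<lambda>t. e' t + w) ` T))"
    unfolding copy_at_eq_image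
    using tiled_by_translates_vimage[where e = "single c", OF add e inj]
      single_add_in_pow_space[OF \<open>c < n\<close>] by blast
  have "copy_at c T ` (pow_space n \<inter> \<phi> -` {w}) \<subseteq> copy_at c T ` pow_space n"
    by blast
  also have "\<dots> \<subseteq> copies n T"
    unfolding copies_def using \<open>c < n\<close> by (intro UN_upper) simp
  finally show ?thesis
    by (rule tiled_by_mono[OF tiled])
qed

definition mixed_proj ::
    "nat \<Rightarrow> nat \<Rightarrow> ('g::zero \<Rightarrow> 'h::zero) \<Rightarrow> (nat \<Rightarrow> 'g) \<Rightarrow> (nat \<Rightarrow> 'g) \<times> (nat \<Rightarrow> 'h)"
  where "mixed_proj k l \<rho> p =
    (\<lambda>m. if m < k then p m else 0, \<lambda>m. if m < l then \<rho> (p (k + m)) else 0)"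

context
  fixes \<rho> :: "'g::ab_group_add \<Rightarrow> 'h::ab_group_add"
  assumes add: "\<And>a b. \<rho> (a + b) = \<rho> a + \<rho> b"
begin

lemma additive_zero: "\<rho> 0 = 0"
  using add[of 0 0] by simp

lemma mixed_proj_add: "mixed_proj k l \<rho> (p + q) = mixed_proj k l \<rho> p + mixed_proj k l \<rho> q"
  by (auto simp: mixed_proj_def plus_fun_def add)

lemma mixed_proj_single_left: "i < k \<Longrightarrow> mixed_proj k l \<rho> (single i t) = (single i t, 0)"
  by (auto simp: mixed_proj_def single_def additive_zero)

lemma mixed_proj_single_right:
  "j < l \<Longrightarrow> mixed_proj k l \<rho> (single (k + j) t) = (0, single j (\<rho> t))"
  by (auto simp: mixed_proj_def single_def additive_zero)

lemma mixed_proj_pow_space: "mixed_proj k l \<rho> ` pow_space (k + l) \<subseteq> pow_space k \<times> pow_space l"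
  by (auto simp: mixed_proj_def pow_space_def additive_zero)

lemma tiled_by_copies_vimage_left_copy:
  assumes "i < k"
  shows "tiled_by (copies (k + l) T)
           (pow_space (k + l) \<inter> mixed_proj k l \<rho> -` (copy_at i T x \<times> {y}))"
proof -
  have "copy_at i T x \<times> {y} = (\<lambda>t. (single i t, 0) + (x, y)) ` T"
    unfolding copy_at_eq_image add_Pair add_0 by blast
  moreover have "tiled_by (copies (k + l) T)
      (pow_space (k + l) \<inter> mixed_proj k l \<rho> -` ((\<lambda>t. (single i t, 0) + (x, y)) ` T))"
  proof (rule tiled_by_copies_vimage[where c = i and e' = "\<lambda>t. (single i t, 0)"])
    show "inj_on (\<lambda>t. (single i t, 0 :: nat \<Rightarrow> 'h)) T"
      by (simp add: inj_on_def)
  qed (simp_all add: assms trans_less_add1 mixed_proj_add mixed_proj_single_left)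
  ultimately show ?thesis
    by simp
qed

lemma tiled_by_copies_vimage_right_copy:
  assumes "j < l" and "inj_on \<rho> T"
  shows "tiled_by (copies (k + l) T)
           (pow_space (k + l) \<inter> mixed_proj k l \<rho> -` ({x} \<times> copy_at j (\<rho> ` T) y))"
proof -
  have "{x} \<times> copy_at j (\<rho> ` T) y = (\<lambda>t. (0, single j (\<rho> t)) + (x, y)) ` T"
    unfolding copy_at_eq_image add_Pair add_0 image_image by blast
  moreover have "tiled_by (copies (k + l) T)
      (pow_space (k + l) \<inter> mixed_proj k l \<rho> -` ((\<lambda>t. (0, single j (\<rho> t)) + (x, y)) ` T))"
  proof (rule tiled_by_copies_vimage[where c = "k + j" and e' = "\<lambda>t. (0, single j (\<rho> t))"])
    show "inj_on (\<lambda>t. (0 :: nat \<Rightarrow> 'g, single j (\<rho> t))) T"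
      using assms(2) by (simp add: inj_on_def)
  qed (simp_all add: assms(1) mixed_proj_add mixed_proj_single_right)
  ultimately show ?thesis
    by simp
qed

end

theorem corollary18:
  fixes T :: "'g::ab_group_add set" and \<rho> :: "'g \<Rightarrow> 'h::ab_group_add"
    and k l :: nat
  assumes "tile T"
    and "\<And>a b. \<rho> (a + b) = \<rho> a + \<rho> b"
    and "surj \<rho>"
    and "inj_on \<rho> T"
    and "mixed_tilable k l T (\<rho> ` T)"
  shows "pow_tilable (k + l) T"
proof -
  obtain \<C> where tiles: "\<forall>C\<in>\<C>.
             (\<exists>i<k. \<exists>x\<in>pow_space k. \<exists>y\<in>pow_space l. C = copy_at i T x \<times> {y})
           \<or> (\<exists>j<l. \<exists>x\<in>pow_space k. \<exists>y\<in>pow_space l. C = {x} \<times> copy_at j (\<rho> ` T) y)"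
    and "disjoint \<C>" and cover: "\<Union>\<C> = pow_space k \<times> pow_space l"
    using assms(5) unfolding mixed_tilable_def by blast
  have "tiled_by (copies (k + l) T) (pow_space (k + l))"
  proof (rule tiled_by_vimage[OF \<open>disjoint \<C>\<close>])
    show "mixed_proj k l \<rho> ` pow_space (k + l) \<subseteq> \<Union>\<C>"
      unfolding cover using assms(2) by (rule mixed_proj_pow_space)
    show "tiled_by (copies (k + l) T) (pow_space (k + l) \<inter> mixed_proj k l \<rho> -` C)"
      if "C \<in> \<C>" for C
      using tiles[rule_format, OF that]
      by (elim disjE exE conjE bexE)
        (simp_all add: tiled_by_copies_vimage_left_copy[OF assms(2)]
          tiled_by_copies_vimage_right_copy[OF assms(2) _ assms(4)])
  qed
  then show ?thesis
    by (simp add: pow_tilable_iff_tiled_by)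
qed

end
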